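(* Let $f\in\mathbb{R}[X_1,\dots,X_n]$ be a non-constant polynomial of degree $2d$ with $f_{2d,i}>0$ for $i=1,\dots,n$. Then $f_{gp}=f_0-m^*$, where $m^*$ is the optimal value of the optimization problem $$\text{Minimize } \sum_{\alpha\in\Delta^{<2d}}(2d-|\alpha|)\left[\left(\frac{f_{\alpha}}{2d}\right)^{2d}\alpha^{\alpha}a_{\alpha}^{-\alpha}\right]^{\frac{1}{2d-|\alpha|}}$$ $$\text{subject to } \sum_{\alpha\in\Delta}\frac{a_{\alpha,i}}{f_{2d,i}}\le 1,\ i=1,\dots,n,\quad\text{and}\quad \frac{(2d)^{2d}a_{\alpha}^{\alpha}}{|f_{\alpha}|^{2d}\alpha^{\alpha}}=1,\ \alpha\in\Delta,\ |\alpha|=2d,$$ in the positive variables $a_{\alpha,i}$, $\alpha\in\Delta$, $i=1,\dots,n$, $\alpha_i\neq0$ (with $a_{\alpha,i}:=0$ when $\alpha_i=0$, and $a_\alpha=(a_{\alpha,1},\dots,a_{\alpha,n})$). Moreover this problem is a geometric program: the objective and the inequality-constraint functions are posynomials, and the equality-constraint functions are monomial functions, in these variables.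
   Context: $\mathbb{N}=\{0,1,2,\dots\}$. For $\alpha\in\mathbb{N}^n$ write $\underline{X}^\alpha=X_1^{\alpha_1}\cdots X_n^{\alpha_n}$, $|\alpha|=\sum_i\alpha_i$, and for $a\in\mathbb{R}^n$, $a^{\alpha}=\prod_i a_i^{\alpha_i}$ with $0^0=1$ ($a_\alpha^{-\alpha}$ means $1/a_\alpha^\alpha$). For $f=\sum_\alpha f_\alpha\underline{X}^\alpha$ of degree $2d$: $f_0$ constant term, $f_{2d,i}$ coefficient of $X_i^{2d}$, $\Omega=\{\alpha: f_\alpha\ne0\}\setminus\{\underline{0},2d\epsilon_1,\dots,2d\epsilon_n\}$, $\Delta=\{\alpha\in\Omega:\ f_\alpha<0\text{ or }\alpha_i\text{ odd for some }i\}$, $\Delta^{<2d}=\{\alpha\in\Delta:|\alpha|<2d\}$. $f_{gp}$ is the supremum (with $\sup\emptyset=-\infty$) of all $r\in\mathbb{R}$ for which there exist reals $a_{\alpha,i}\ge0$ ($\alpha\in\Delta$, $i=1,\dots,n$), $a_{\alpha,i}=0$ iff $\alpha_i=0$, with (1) $(2d)^{2d}a_\alpha^\alpha=|f_\alpha|^{2d}\alpha^\alpha$ for $\alpha\in\Delta$, $|\alpha|=2d$; (2) $f_{2d,i}\ge\sum_{\alpha\in\Delta}a_{\alpha,i}$ for all $i$; (3) $f_0-r\ge\sum_{\alpha\in\Delta^{<2d}}(2d-|\alpha|)\big[\frac{|f_\alpha|^{2d}\alpha^\alpha}{(2d)^{2d}a_\alpha^\alpha}\big]^{1/(2d-|\alpha|)}$.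 The optimal value $m^*$ is the infimum of the objective over the feasible set ($+\infty$ if the feasible set is empty). A monomial function on $\mathbb{R}_{>0}^N$ is $c x_1^{b_1}\cdots x_N^{b_N}$ with $c>0$, $b_j\in\mathbb{R}$; a posynomial is a finite sum of monomial functions. *)

theory Defs
  imports "HOL-Analysis.Analysis"
begin

text \<open>Polynomials in the variables X_i, i ranging over the finite type 'n (so n = CARD('n)),
  are represented by their coefficient functions on exponent vectors alpha :: 'n => nat,
  required to have finite support.\<close>

definition mdeg :: "('n::finite \<Rightarrow> nat) \<Rightarrow> nat" where
  "mdeg \<alpha> = (\<Sum>i\<in>UNIV. \<alpha> i)"

definition mpoly_degree :: "(('n::finite \<Rightarrow> nat) \<Rightarrow> real) \<Rightarrow> nat" where
  "mpoly_degree f = (if {\<alpha>. f \<alpha> \<noteq> 0} = {} then 0 else Max (mdeg ` {\<alpha>. f \<alpha> \<noteq> 0}))"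

definition sepsv :: "nat \<Rightarrow> 'n \<Rightarrow> 'n \<Rightarrow> nat" where
  "sepsv k i = (\<lambda>j. if j = i then k else 0)"

text \<open>a^alpha = prod_i a_i^alpha_i (with 0^0 = 1).\<close>
definition mpow :: "('n::finite \<Rightarrow> real) \<Rightarrow> ('n \<Rightarrow> nat) \<Rightarrow> real" where
  "mpow a \<alpha> = (\<Prod>i\<in>UNIV. a i ^ \<alpha> i)"

definition Omega :: "(('n::finite \<Rightarrow> nat) \<Rightarrow> real) \<Rightarrow> nat \<Rightarrow> ('n \<Rightarrow> nat) set" where
  "Omega f d = {\<alpha>. f \<alpha> \<noteq> 0} - ({\<lambda>_. 0} \<union> range (sepsv (2*d)))"

definition Delta :: "(('n::finite \<Rightarrow> nat) \<Rightarrow> real) \<Rightarrow> nat \<Rightarrow> ('n \<Rightarrow> nat) set" where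
  "Delta f d = {\<alpha> \<in> Omega f d. f \<alpha> < 0 \<or> (\<exists>i. odd (\<alpha> i))}"

definition Delta_lt :: "(('n::finite \<Rightarrow> nat) \<Rightarrow> real) \<Rightarrow> nat \<Rightarrow> ('n \<Rightarrow> nat) set" where
  "Delta_lt f d = {\<alpha> \<in> Delta f d. mdeg \<alpha> < 2*d}"

definition fgp_feasible ::
  "(('n::finite \<Rightarrow> nat) \<Rightarrow> real) \<Rightarrow> nat \<Rightarrow> real \<Rightarrow> (('n \<Rightarrow> nat) \<Rightarrow> 'n \<Rightarrow> real) \<Rightarrow> bool" where
  "fgp_feasible f d r a \<longleftrightarrow>
     (\<forall>\<alpha>\<in>Delta f d. \<forall>i. a \<alpha> i \<ge> 0 \<and> (a \<alpha> i = 0 \<longleftrightarrow> \<alpha> i = 0)) \<and>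
     (\<forall>\<alpha>\<in>Delta f d. mdeg \<alpha> = 2*d \<longrightarrow>
        real (2*d) ^ (2*d) * mpow (a \<alpha>) \<alpha> = \<bar>f \<alpha>\<bar> ^ (2*d) * mpow (\<lambda>i. real (\<alpha> i)) \<alpha>) \<and>
     (\<forall>i. f (sepsv (2*d) i) \<ge> (\<Sum>\<alpha>\<in>Delta f d. a \<alpha> i)) \<and>
     f (\<lambda>_. 0) - r \<ge> (\<Sum>\<alpha>\<in>Delta_lt f d. real (2*d - mdeg \<alpha>) *
        ((\<bar>f \<alpha>\<bar> ^ (2*d) * mpow (\<lambda>i. real (\<alpha> i)) \<alpha>) / (real (2*d) ^ (2*d) * mpow (a \<alpha>) \<alpha>))
          powr (1 / real (2*d - mdeg \<alpha>)))"

text \<open>f_gp as an extended real; Sup of the empty set is -infinity.\<close>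
definition f_gp :: "(('n::finite \<Rightarrow> nat) \<Rightarrow> real) \<Rightarrow> nat \<Rightarrow> ereal" where
  "f_gp f d = Sup {ereal r | r. \<exists>a. fgp_feasible f d r a}"

definition gp_vars :: "(('n::finite \<Rightarrow> nat) \<Rightarrow> real) \<Rightarrow> nat \<Rightarrow> (('n \<Rightarrow> nat) \<times> 'n) set" where
  "gp_vars f d = {(\<alpha>, i). \<alpha> \<in> Delta f d \<and> \<alpha> i \<noteq> 0}"

definition gp_a :: "(('n::finite \<Rightarrow> nat) \<Rightarrow> real) \<Rightarrow> nat \<Rightarrow> (('n \<Rightarrow> nat) \<times> 'n \<Rightarrow> real)
    \<Rightarrow> ('n \<Rightarrow> nat) \<Rightarrow> 'n \<Rightarrow> real" where
  "gp_a f d x \<alpha> i = (if (\<alpha>, i) \<in> gp_vars f d then x (\<alpha>, i) else 0)"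

definition gp_objective :: "(('n::finite \<Rightarrow> nat) \<Rightarrow> real) \<Rightarrow> nat \<Rightarrow> (('n \<Rightarrow> nat) \<times> 'n \<Rightarrow> real) \<Rightarrow> real" where
  "gp_objective f d x = (\<Sum>\<alpha>\<in>Delta_lt f d. real (2*d - mdeg \<alpha>) *
      ((f \<alpha> / real (2*d)) ^ (2*d) * mpow (\<lambda>i. real (\<alpha> i)) \<alpha> * inverse (mpow (gp_a f d x \<alpha>) \<alpha>))
        powr (1 / real (2*d - mdeg \<alpha>)))"

definition gp_ineq :: "(('n::finite \<Rightarrow> nat) \<Rightarrow> real) \<Rightarrow> nat \<Rightarrow> 'n \<Rightarrow> (('n \<Rightarrow> nat) \<times> 'n \<Rightarrow> real) \<Rightarrow> real" where
  "gp_ineq f d i x = (\<Sum>\<alpha>\<in>Delta f d. gp_a f d x \<alpha> i / f (sepsv (2*d) i))"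

definition gp_eq :: "(('n::finite \<Rightarrow> nat) \<Rightarrow> real) \<Rightarrow> nat \<Rightarrow> ('n \<Rightarrow> nat) \<Rightarrow> (('n \<Rightarrow> nat) \<times> 'n \<Rightarrow> real) \<Rightarrow> real" where
  "gp_eq f d \<alpha> x = real (2*d) ^ (2*d) * mpow (gp_a f d x \<alpha>) \<alpha> /
                    (\<bar>f \<alpha>\<bar> ^ (2*d) * mpow (\<lambda>i. real (\<alpha> i)) \<alpha>)"

definition gp_feasible :: "(('n::finite \<Rightarrow> nat) \<Rightarrow> real) \<Rightarrow> nat \<Rightarrow> (('n \<Rightarrow> nat) \<times> 'n \<Rightarrow> real) \<Rightarrow> bool" where
  "gp_feasible f d x \<longleftrightarrow>
     (\<forall>v\<in>gp_vars f d. x v > 0) \<and>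
     (\<forall>i. gp_ineq f d i x \<le> 1) \<and>
     (\<forall>\<alpha>\<in>Delta f d. mdeg \<alpha> = 2*d \<longrightarrow> gp_eq f d \<alpha> x = 1)"

text \<open>Optimal value; Inf of the empty set is +infinity.\<close>
definition m_star :: "(('n::finite \<Rightarrow> nat) \<Rightarrow> real) \<Rightarrow> nat \<Rightarrow> ereal" where
  "m_star f d = Inf {ereal (gp_objective f d x) | x. gp_feasible f d x}"

definition monomial_fun :: "'v set \<Rightarrow> (('v \<Rightarrow> real) \<Rightarrow> real) \<Rightarrow> bool" where
  "monomial_fun V g \<longleftrightarrow> (\<exists>c::real. \<exists>b::'v \<Rightarrow> real. c > 0 \<and>
     (\<forall>x. (\<forall>v\<in>V. x v > 0) \<longrightarrow> g x = c * (\<Prod>v\<in>V. x v powr b v)))"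

definition posynomial :: "'v set \<Rightarrow> (('v \<Rightarrow> real) \<Rightarrow> real) \<Rightarrow> bool" where
  "posynomial V g \<longleftrightarrow> (\<exists>m::nat. \<exists>c::nat \<Rightarrow> real. \<exists>b::nat \<Rightarrow> 'v \<Rightarrow> real. (\<forall>k<m. c k > 0) \<and>
     (\<forall>x. (\<forall>v\<in>V. x v > 0) \<longrightarrow> g x = (\<Sum>k<m. c k * (\<Prod>v\<in>V. x v powr b k v))))"

end

theory Submission
  imports Defs
begin

text \<open>Dividing constraint (1) defining f_gp by |f_alpha|^(2d) alpha^alpha and constraint (2) by
  f_(2d,i) > 0 gives exactly the constraints of the geometric program in the variables a_(alpha,i)
  with alpha_i \<noteq> 0, and because 2d is even the right-hand side of (3) is its objective. Hence
  the admissible r are exactly those below f_0 minus the objective at some feasible point, that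
  is f_gp = f_0 - m*. The program is geometric because monomial functions are closed under
  products and real powers, and posynomials under sums.\<close>

lemma monomial_fun_cong:
  assumes "monomial_fun V g" "\<And>x. (\<forall>v\<in>V. x v > 0) \<Longrightarrow> g x = h x"
  shows "monomial_fun V h"
  using assms unfolding monomial_fun_def by metis

lemma monomial_fun_pos:
  assumes "monomial_fun V g" "\<forall>v\<in>V. x v > 0"
  shows "g x > 0"
proof -
  obtain c b where "c > 0" "\<forall>x. (\<forall>v\<in>V. x v > 0) \<longrightarrow> g x = c * (\<Prod>v\<in>V. x v powr b v)"
    using assms(1) unfolding monomial_fun_def by blast
  then show ?thesis using assms(2) by (auto intro!: mult_pos_pos prod_pos)
qed

lemma monomial_fun_const:
  assumes "c > 0"
  shows "monomial_fun V (\<lambda>x. c)"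
  unfolding monomial_fun_def using assms
  by (intro exI[of _ c] exI[of _ "\<lambda>_. 0"]) (auto intro!: prod.neutral)

lemma monomial_fun_var:
  assumes "finite V" "w \<in> V"
  shows "monomial_fun V (\<lambda>x. x w)"
  unfolding monomial_fun_def
proof (intro exI[of _ 1] exI[of _ "\<lambda>v. if v = w then 1 else 0"] conjI allI impI)
  fix x :: "_ \<Rightarrow> real"
  assume "\<forall>v\<in>V. x v > 0"
  then have "(\<Prod>v\<in>V. x v powr (if v = w then 1 else 0)) = (\<Prod>v\<in>V. if v = w then x w else 1)"
    by (intro prod.cong) auto
  also have "\<dots> = x w"
    using assms by simp
  finally show "x w = 1 * (\<Prod>v\<in>V. x v powr (if v = w then 1 else 0))"
    by simp
qed simp

lemma monomial_fun_mult:
  assumes "monomial_fun V g" "monomial_fun V h"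
  shows "monomial_fun V (\<lambda>x. g x * h x)"
proof -
  obtain c b where c: "c > 0" "\<forall>x. (\<forall>v\<in>V. x v > 0) \<longrightarrow> g x = c * (\<Prod>v\<in>V. x v powr b v)"
    using assms(1) unfolding monomial_fun_def by blast
  obtain c' b' where c': "c' > 0" "\<forall>x. (\<forall>v\<in>V. x v > 0) \<longrightarrow> h x = c' * (\<Prod>v\<in>V. x v powr b' v)"
    using assms(2) unfolding monomial_fun_def by blast
  show ?thesis
    unfolding monomial_fun_def
  proof (intro exI[of _ "c * c'"] exI[of _ "\<lambda>v. b v + b' v"] conjI allI impI)
    fix x :: "_ \<Rightarrow> real"
    assume "\<forall>v\<in>V. x v > 0"
    then show "g x * h x = c * c' * (\<Prod>v\<in>V. x v powr (b v + b' v))"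
      using c c' by (simp add: powr_add prod.distrib)
  qed (use c c' in simp)
qed

lemma monomial_fun_power:
  assumes "monomial_fun V g"
  shows "monomial_fun V (\<lambda>x. g x ^ n)"
  by (induction n) (simp_all add: monomial_fun_const monomial_fun_mult assms)

lemma monomial_fun_prod:
  assumes "finite I" "\<And>i. i \<in> I \<Longrightarrow> monomial_fun V (g i)"
  shows "monomial_fun V (\<lambda>x. \<Prod>i\<in>I. g i x)"
  using assms by (induction I rule: finite_induct) (simp_all add: monomial_fun_const monomial_fun_mult)

lemma monomial_fun_powr:
  assumes "monomial_fun V g"
  shows "monomial_fun V (\<lambda>x. g x powr p)"
proof -
  obtain c b where c: "c > 0" "\<forall>x. (\<forall>v\<in>V. x v > 0) \<longrightarrow> g x = c * (\<Prod>v\<in>V. x v powr b v)"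
    using assms unfolding monomial_fun_def by blast
  show ?thesis
    unfolding monomial_fun_def
  proof (intro exI[of _ "c powr p"] exI[of _ "\<lambda>v. b v * p"] conjI allI impI)
    fix x :: "_ \<Rightarrow> real"
    assume "\<forall>v\<in>V. x v > 0"
    then have "g x powr p = c powr p * (\<Prod>v\<in>V. x v powr b v) powr p"
      using c by (simp add: powr_mult prod_nonneg)
    then show "g x powr p = c powr p * (\<Prod>v\<in>V. x v powr (b v * p))"
      by (simp add: prod_powr_distrib powr_powr)
  qed (use c in simp)
qed

lemma monomial_fun_inverse:
  assumes "monomial_fun V g"
  shows "monomial_fun V (\<lambda>x. inverse (g x))"
  using monomial_fun_powr[OF assms, of "-1"]
  by (rule monomial_fun_cong) (simp add: powr_minus less_imp_le monomial_fun_pos[OF assms])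

lemma posynomial_cong:
  assumes "posynomial V g" "\<And>x. (\<forall>v\<in>V. x v > 0) \<Longrightarrow> g x = h x"
  shows "posynomial V h"
  using assms unfolding posynomial_def by metis

lemma posynomial_zero: "posynomial V (\<lambda>x. 0)"
  unfolding posynomial_def by (intro exI[of _ 0]) simp

lemma monomial_fun_imp_posynomial:
  assumes "monomial_fun V g"
  shows "posynomial V g"
proof -
  obtain c b where "c > 0" "\<forall>x. (\<forall>v\<in>V. x v > 0) \<longrightarrow> g x = c * (\<Prod>v\<in>V. x v powr b v)"
    using assms unfolding monomial_fun_def by blast
  then show ?thesis
    unfolding posynomial_def by (intro exI[of _ 1] exI[of _ "\<lambda>_. c"] exI[of _ "\<lambda>_. b"]) simp
qed

lemma sum_lessThan_add:
  fixes f :: "nat \<Rightarrow> 'a::comm_monoid_add"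
  shows "(\<Sum>k<m + n. f k) = (\<Sum>k<m. f k) + (\<Sum>k<n. f (m + k))"
  by (induction n) (simp_all add: add.assoc)

lemma posynomial_add:
  assumes "posynomial V g" "posynomial V h"
  shows "posynomial V (\<lambda>x. g x + h x)"
proof -
  obtain m :: nat and c b where
    c: "\<forall>k<m. c k > 0" "\<forall>x. (\<forall>v\<in>V. x v > 0) \<longrightarrow> g x = (\<Sum>k<m. c k * (\<Prod>v\<in>V. x v powr b k v))"
    using assms(1) unfolding posynomial_def by blast
  obtain m' :: nat and c' b' where
    c': "\<forall>k<m'. c' k > 0" "\<forall>x. (\<forall>v\<in>V. x v > 0) \<longrightarrow> h x = (\<Sum>k<m'. c' k * (\<Prod>v\<in>V. x v powr b' k v))"
    using assms(2) unfolding posynomial_def by blast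
  define C where "C k = (if k < m then c k else c' (k - m))" for k
  define B where "B k = (if k < m then b k else b' (k - m))" for k
  show ?thesis
    unfolding posynomial_def
  proof (intro exI[of _ "m + m'"] exI[of _ C] exI[of _ B] conjI allI impI)
    fix k
    assume "k < m + m'"
    then show "C k > 0"
      using c c' by (simp add: C_def)
  next
    fix x :: "_ \<Rightarrow> real"
    assume "\<forall>v\<in>V. x v > 0"
    then show "g x + h x = (\<Sum>k<m + m'. C k * (\<Prod>v\<in>V. x v powr B k v))"
      using c c' by (simp add: sum_lessThan_add C_def B_def)
  qed
qed

lemma posynomial_sum:
  assumes "finite I" "\<And>i. i \<in> I \<Longrightarrow> posynomial V (g i)"
  shows "posynomial V (\<lambda>x. \<Sum>i\<in>I. g i x)"
  using assms by (induction I rule: finite_induct) (simp_all add: posynomial_zero posynomial_add)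

lemma Delta_subset_support: "Delta f d \<subseteq> {\<alpha>. f \<alpha> \<noteq> 0}"
  unfolding Delta_def Omega_def by auto

lemma Delta_lt_subset_Delta: "Delta_lt f d \<subseteq> Delta f d"
  unfolding Delta_lt_def by auto

lemma Delta_coeff_nonzero: "\<alpha> \<in> Delta f d \<Longrightarrow> f \<alpha> \<noteq> 0"
  using Delta_subset_support by blast

lemma finite_Delta: "finite {\<alpha>. f \<alpha> \<noteq> 0} \<Longrightarrow> finite (Delta f d)"
  using Delta_subset_support by (rule finite_subset)

lemma finite_gp_vars:
  fixes f :: "('n::finite \<Rightarrow> nat) \<Rightarrow> real"
  assumes "finite {\<alpha>. f \<alpha> \<noteq> 0}"
  shows "finite (gp_vars f d)"
proof (rule finite_subset)
  show "gp_vars f d \<subseteq> Delta f d \<times> UNIV"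
    unfolding gp_vars_def by auto
  show "finite (Delta f d \<times> (UNIV :: 'n set))"
    using finite_Delta[OF assms] by simp
qed

lemma gp_a_Delta:
  assumes "\<alpha> \<in> Delta f d"
  shows "gp_a f d x \<alpha> i = (if \<alpha> i = 0 then 0 else x (\<alpha>, i))"
  using assms unfolding gp_a_def gp_vars_def by auto

lemma mpow_exponent_pos: "mpow (\<lambda>i. real (\<alpha> i)) \<alpha> > 0"
  unfolding mpow_def by (intro prod_pos) (auto simp: zero_less_power_eq)

lemma monomial_fun_mpow_gp_a:
  assumes fin: "finite {\<alpha>. f \<alpha> \<noteq> 0}" and \<alpha>: "\<alpha> \<in> Delta f d"
  shows "monomial_fun (gp_vars f d) (\<lambda>x. mpow (gp_a f d x \<alpha>) \<alpha>)"
proof -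
  have "monomial_fun (gp_vars f d) (\<lambda>x. if \<alpha> i = 0 then 1 else x (\<alpha>, i) ^ \<alpha> i)" for i
  proof (cases "\<alpha> i = 0")
    case False
    then have "(\<alpha>, i) \<in> gp_vars f d"
      using \<alpha> unfolding gp_vars_def by simp
    then show ?thesis
      using False monomial_fun_power[OF monomial_fun_var[OF finite_gp_vars[OF fin]]] by simp
  qed (simp add: monomial_fun_const)
  then have "monomial_fun (gp_vars f d) (\<lambda>x. \<Prod>i\<in>UNIV. if \<alpha> i = 0 then 1 else x (\<alpha>, i) ^ \<alpha> i)"
    by (intro monomial_fun_prod) simp_all
  then show ?thesis
    unfolding mpow_def
    by (rule monomial_fun_cong) (intro prod.cong refl, simp add: gp_a_Delta[OF \<alpha>])
qed

lemma gp_eq_monomial_fun: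
  assumes fin: "finite {\<alpha>. f \<alpha> \<noteq> 0}" and \<alpha>: "\<alpha> \<in> Delta f d"
  shows "monomial_fun (gp_vars f d) (gp_eq f d \<alpha>)"
proof -
  define K where "K = real (2*d) ^ (2*d) / (\<bar>f \<alpha>\<bar> ^ (2*d) * mpow (\<lambda>i. real (\<alpha> i)) \<alpha>)"
  have "K > 0"
    unfolding K_def using Delta_coeff_nonzero[OF \<alpha>] mpow_exponent_pos[of \<alpha>]
    by (cases "d = 0") simp_all
  then have "monomial_fun (gp_vars f d) (\<lambda>x. K * mpow (gp_a f d x \<alpha>) \<alpha>)"
    by (intro monomial_fun_mult monomial_fun_const monomial_fun_mpow_gp_a fin \<alpha>)
  then show ?thesis
    by (rule monomial_fun_cong) (simp add: gp_eq_def K_def)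
qed

lemma gp_ineq_posynomial:
  assumes fin: "finite {\<alpha>. f \<alpha> \<noteq> 0}" and pos: "f (sepsv (2*d) i) > 0"
  shows "posynomial (gp_vars f d) (gp_ineq f d i)"
  unfolding gp_ineq_def
proof (intro posynomial_sum finite_Delta[OF fin])
  fix \<alpha>
  assume \<alpha>: "\<alpha> \<in> Delta f d"
  show "posynomial (gp_vars f d) (\<lambda>x. gp_a f d x \<alpha> i / f (sepsv (2*d) i))"
  proof (cases "\<alpha> i = 0")
    case True
    show ?thesis
      using posynomial_zero by (rule posynomial_cong) (simp add: gp_a_Delta[OF \<alpha>] True)
  next
    case False
    then have "(\<alpha>, i) \<in> gp_vars f d"
      using \<alpha> unfolding gp_vars_def by simp
    then have "monomial_fun (gp_vars f d) (\<lambda>x. x (\<alpha>, i) * inverse (f (sepsv (2*d) i)))"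
      using pos by (intro monomial_fun_mult monomial_fun_var finite_gp_vars fin monomial_fun_const) simp_all
    then show ?thesis
      by (rule posynomial_cong[OF monomial_fun_imp_posynomial])
        (simp add: gp_a_Delta[OF \<alpha>] False divide_inverse)
  qed
qed

lemma gp_objective_posynomial:
  assumes fin: "finite {\<alpha>. f \<alpha> \<noteq> 0}"
  shows "posynomial (gp_vars f d) (gp_objective f d)"
  unfolding gp_objective_def
proof (intro posynomial_sum finite_subset[OF Delta_lt_subset_Delta finite_Delta[OF fin]])
  fix \<alpha>
  assume "\<alpha> \<in> Delta_lt f d"
  then have \<alpha>: "\<alpha> \<in> Delta f d" and "mdeg \<alpha> < 2*d"
    unfolding Delta_lt_def by auto
  then have "f \<alpha> \<noteq> 0" and "real (2*d - mdeg \<alpha>) > 0"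
    using Delta_coeff_nonzero by auto
  moreover have "(f \<alpha> / real (2*d)) ^ (2*d) * mpow (\<lambda>i. real (\<alpha> i)) \<alpha> > 0"
    using \<open>f \<alpha> \<noteq> 0\<close> \<open>mdeg \<alpha> < 2*d\<close> mpow_exponent_pos[of \<alpha>] by (simp add: zero_less_power_eq)
  ultimately show "posynomial (gp_vars f d) (\<lambda>x. real (2*d - mdeg \<alpha>) *
      ((f \<alpha> / real (2*d)) ^ (2*d) * mpow (\<lambda>i. real (\<alpha> i)) \<alpha> * inverse (mpow (gp_a f d x \<alpha>) \<alpha>))
        powr (1 / real (2*d - mdeg \<alpha>)))"
    by (intro monomial_fun_imp_posynomial monomial_fun_mult monomial_fun_const monomial_fun_powr
        monomial_fun_inverse monomial_fun_mpow_gp_a fin \<alpha>)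
qed

definition fgp_cost :: "(('n::finite \<Rightarrow> nat) \<Rightarrow> real) \<Rightarrow> nat \<Rightarrow> (('n \<Rightarrow> nat) \<Rightarrow> 'n \<Rightarrow> real) \<Rightarrow> real" where
  "fgp_cost f d a = (\<Sum>\<alpha>\<in>Delta_lt f d. real (2*d - mdeg \<alpha>) *
     ((\<bar>f \<alpha>\<bar> ^ (2*d) * mpow (\<lambda>i. real (\<alpha> i)) \<alpha>) / (real (2*d) ^ (2*d) * mpow (a \<alpha>) \<alpha>))
       powr (1 / real (2*d - mdeg \<alpha>)))"

lemmas fgp_feasible_iff = fgp_feasible_def[folded fgp_cost_def]

lemma fgp_cost_cong:
  "(\<And>\<alpha>. \<alpha> \<in> Delta f d \<Longrightarrow> a \<alpha> = b \<alpha>) \<Longrightarrow> fgp_cost f d a = fgp_cost f d b"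
  unfolding fgp_cost_def using Delta_lt_subset_Delta[of f d]
  by (intro sum.cong refl) (simp add: subset_iff)

lemma gp_objective_eq_fgp_cost: "gp_objective f d x = fgp_cost f d (gp_a f d x)"
  unfolding gp_objective_def fgp_cost_def
  by (intro sum.cong refl) (simp add: power_even_abs field_simps)

lemma fgp_feasible_imp_gp_feasible:
  assumes pos: "\<forall>i. f (sepsv (2*d) i) > 0" and feas: "fgp_feasible f d r a"
  shows "gp_feasible f d (case_prod a) \<and> gp_objective f d (case_prod a) \<le> f (\<lambda>_. 0) - r"
proof -
  note feas' = feas[unfolded fgp_feasible_iff]
  have gp_a: "gp_a f d (case_prod a) \<alpha> = a \<alpha>" if "\<alpha> \<in> Delta f d" for \<alpha>
    using feas' that by (auto simp: gp_a_Delta[OF that])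
  have "case_prod a v > 0" if v: "v \<in> gp_vars f d" for v
  proof -
    obtain \<alpha> i where "v = (\<alpha>, i)" "\<alpha> \<in> Delta f d" "\<alpha> i \<noteq> 0"
      using v unfolding gp_vars_def by blast
    moreover from this(2) have "a \<alpha> i \<ge> 0" and "a \<alpha> i = 0 \<longleftrightarrow> \<alpha> i = 0"
      using feas' by blast+
    ultimately show ?thesis
      by auto
  qed
  moreover have "gp_ineq f d i (case_prod a) \<le> 1" for i
  proof -
    have "gp_ineq f d i (case_prod a) = (\<Sum>\<alpha>\<in>Delta f d. a \<alpha> i) / f (sepsv (2*d) i)"
      unfolding gp_ineq_def sum_divide_distrib by (intro sum.cong refl) (simp add: gp_a)
    then show ?thesis
      using feas' pos by simp
  qed
  moreover have "gp_eq f d \<alpha> (case_prod a) = 1" if "\<alpha> \<in> Delta f d" "mdeg \<alpha> = 2*d" for \<alpha>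
  proof -
    show ?thesis
      using feas' that Delta_coeff_nonzero[OF that(1)] mpow_exponent_pos[of \<alpha>]
      by (simp add: gp_eq_def gp_a)
  qed
  moreover have "gp_objective f d (case_prod a) = fgp_cost f d a"
    unfolding gp_objective_eq_fgp_cost by (rule fgp_cost_cong) (simp add: gp_a)
  ultimately show ?thesis
    using feas' unfolding gp_feasible_def by auto
qed

lemma gp_feasible_imp_fgp_feasible:
  assumes pos: "\<forall>i. f (sepsv (2*d) i) > 0" and feas: "gp_feasible f d x"
  shows "fgp_feasible f d (f (\<lambda>_. 0) - gp_objective f d x) (gp_a f d x)"
  unfolding fgp_feasible_iff
proof (intro conjI ballI allI impI)
  fix \<alpha> i
  assume \<alpha>: "\<alpha> \<in> Delta f d"
  then have "\<alpha> i \<noteq> 0 \<Longrightarrow> x (\<alpha>, i) > 0"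
    using feas unfolding gp_feasible_def gp_vars_def by auto
  then show "gp_a f d x \<alpha> i \<ge> 0" and "gp_a f d x \<alpha> i = 0 \<longleftrightarrow> \<alpha> i = 0"
    by (auto simp: gp_a_Delta[OF \<alpha>])
next
  fix \<alpha>
  assume \<alpha>: "\<alpha> \<in> Delta f d" and "mdeg \<alpha> = 2*d"
  then have "gp_eq f d \<alpha> x = 1"
    using feas unfolding gp_feasible_def by blast
  moreover have "f \<alpha> \<noteq> 0"
    using Delta_coeff_nonzero[OF \<alpha>] .
  ultimately show "real (2*d) ^ (2*d) * mpow (gp_a f d x \<alpha>) \<alpha> = \<bar>f \<alpha>\<bar> ^ (2*d) * mpow (\<lambda>i. real (\<alpha> i)) \<alpha>"
    using mpow_exponent_pos[of \<alpha>] by (simp add: gp_eq_def divide_eq_1_iff)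
next
  fix i
  have "gp_ineq f d i x \<le> 1"
    using feas unfolding gp_feasible_def by blast
  then show "(\<Sum>\<alpha>\<in>Delta f d. gp_a f d x \<alpha> i) \<le> f (sepsv (2*d) i)"
    using pos[rule_format, of i] by (simp add: gp_ineq_def flip: sum_divide_distrib)
qed (simp add: gp_objective_eq_fgp_cost)

lemma f_gp_eq_minus_m_star:
  assumes pos: "\<forall>i. f (sepsv (2*d) i) > 0"
  shows "f_gp f d = ereal (f (\<lambda>_. 0)) - m_star f d"
proof -
  let ?feasible = "{x. gp_feasible f d x}"
  let ?R = "{ereal r | r. \<exists>a. fgp_feasible f d r a}"
  let ?T = "(\<lambda>x. ereal (f (\<lambda>_. 0)) - ereal (gp_objective f d x)) ` ?feasible"
  have "Sup ?R \<le> Sup ?T"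
  proof (rule Sup_mono)
    fix y
    assume "y \<in> ?R"
    then obtain r a where y: "y = ereal r" and "fgp_feasible f d r a"
      by blast
    from fgp_feasible_imp_gp_feasible[OF pos this(2)] show "\<exists>t\<in>?T. y \<le> t"
      unfolding y by (intro bexI[of _ "ereal (f (\<lambda>_. 0)) - ereal (gp_objective f d (case_prod a))"]) auto
  qed
  moreover have "Sup ?T \<le> Sup ?R"
    using gp_feasible_imp_fgp_feasible[OF pos] by (intro Sup_mono) force
  ultimately have f_gp: "f_gp f d = Sup ?T"
    unfolding f_gp_def by (rule antisym)
  have m_star: "m_star f d = (INF x\<in>?feasible. ereal (gp_objective f d x))"
    unfolding m_star_def by (rule arg_cong[where f = Inf]) blast
  show ?thesis
  proof (cases "?feasible = {}")
    case True
    show ?thesis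
      unfolding f_gp m_star True by (simp add: bot_ereal_def top_ereal_def)
  next
    case False
    then show ?thesis
      unfolding f_gp m_star by (rule SUP_ereal_minus_right) simp
  qed
qed

theorem corollary3p6:
  fixes f :: "('n::finite \<Rightarrow> nat) \<Rightarrow> real" and d :: nat
  assumes "finite {\<alpha>. f \<alpha> \<noteq> 0}"
    and "d > 0"
    and "mpoly_degree f = 2*d"
    and "\<forall>i. f (sepsv (2*d) i) > 0"
  shows "f_gp f d = ereal (f (\<lambda>_. 0)) - m_star f d \<and>
         posynomial (gp_vars f d) (gp_objective f d) \<and>
         (\<forall>i. posynomial (gp_vars f d) (gp_ineq f d i)) \<and>
         (\<forall>\<alpha>\<in>Delta f d. mdeg \<alpha> = 2*d \<longrightarrow> monomial_fun (gp_vars f d) (gp_eq f d \<alpha>))"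
  using f_gp_eq_minus_m_star[OF assms(4)] gp_objective_posynomial[OF assms(1)]
    gp_ineq_posynomial[OF assms(1)] gp_eq_monomial_fun[OF assms(1)] assms(4)
  by blast

end
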